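(* Let $p>3$ be a prime, $q$ a power of $p$, and $n\ge 0$ an integer with $3\mid n$. If $F_n(1,x)$ is a permutation polynomial of $\mathbb{F}_q$, then $\gcd(n,q^2-1)=3$.
   Context: For an integer $n\ge 1$, the $n$-th reversed Dickson polynomial of the third kind is $F_n(a,x)=\sum_{i=0}^{\lfloor n/2\rfloor}\frac{n-2i}{n-i}\binom{n-i}{i}(-x)^i a^{n-2i}$, where each coefficient $\frac{n-2i}{n-i}\binom{n-i}{i}$ is an integer (read in $\mathbb{F}_q$), and $F_0(a,x)=0$. A polynomial $f\in\mathbb{F}_q[x]$ is a permutation polynomial of $\mathbb{F}_q$ if $c\mapsto f(c)$ is a bijection of $\mathbb{F}_q$. *)

theory Defs
  imports "HOL-Computational_Algebra.Polynomial"
begin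

text \<open>Integer coefficient (n-2i)/(n-i) * binom(n-i,i) for 0 <= i <= n div 2, n >= 1
  (exact division; all quantities are natural numbers).\<close>
definition rd3_coeff :: "nat \<Rightarrow> nat \<Rightarrow> nat" where
  "rd3_coeff n i = ((n - 2*i) * ((n - i) choose i)) div (n - i)"

definition rev_dickson3 :: "nat \<Rightarrow> 'a::comm_ring_1 \<Rightarrow> 'a poly" where
  "rev_dickson3 n a = (if n = 0 then 0 else
     (\<Sum>i\<le>n div 2. monom (of_nat (rd3_coeff n i) * (-1)^i * a^(n - 2*i)) i))"

definition permutation_poly :: "'a::{finite,field} poly \<Rightarrow> bool" where
  "permutation_poly f \<longleftrightarrow> bij (\<lambda>c. poly f c)"

end

theory Submission
  imports Defs "HOL-Algebra.Sylow" "HOL-Algebra.Multiplicative_Group"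
begin

text \<open>
  Let \<open>w \<noteq> \<plusminus>1\<close> be an \<open>n\<close>-th root of unity in the field with \<open>q\<^sup>2\<close> elements that lies in
  \<open>\<bbbF>\<^sub>q\<^sup>*\<close> or in the subgroup of norm one. With \<open>u = w/(1 + w)\<close> and \<open>v = 1/(1 + w)\<close> we have
  \<open>u + v = 1\<close> and \<open>u\<^sup>n = v\<^sup>n\<close>, and since \<open>u\<^sup>n - v\<^sup>n = (u - v) F\<^sub>n(1, u v)\<close> for \<open>u + v = 1\<close>, the
  element \<open>w/(1 + w)\<^sup>2 = u v\<close> of \<open>\<bbbF>\<^sub>q\<close> is a root of \<open>F\<^sub>n(1, x)\<close>. A permutation polynomial has a
  single root, and \<open>w/(1 + w)\<^sup>2\<close> determines \<open>w\<close> up to \<open>w \<mapsto> 1/w\<close>, so there are at most two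
  such \<open>w\<close>. The two cyclic groups contain \<open>gcd(n, q - 1)\<close> and \<open>gcd(n, q + 1)\<close> such roots of
  unity and meet only in \<open>\<plusminus>1\<close>; the resulting bound on \<open>gcd(n, q - 1) + gcd(n, q + 1)\<close>,
  together with \<open>3 dvd n\<close> and \<open>\<not> 3 dvd q\<close>, forces \<open>gcd(n, q\<^sup>2 - 1) = 3\<close>.
\<close>

definition ring_of_type :: "'a::field ring" where
  "ring_of_type = \<lparr>carrier = UNIV, mult = (*), one = 1, zero = 0, add = (+)\<rparr>"

lemma field_ring_of_type: "field (ring_of_type :: 'a::field ring)"
proof -
  have "cring (ring_of_type :: 'a ring)"
    by (rule cringI; (rule abelian_groupI comm_monoidI)?)
       (auto simp: ring_of_type_def algebra_simps intro: exI[of _ "- _"])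
  then show ?thesis
    by (rule cring.cring_fieldI)
       (auto simp: ring_of_type_def Units_def, metis left_inverse right_inverse)
qed

lemma pow_ring_of_type: "x [^]\<^bsub>ring_of_type\<^esub> (n::nat) = x ^ n"
  by (induction n) (simp_all add: ring_of_type_def)

lemma finite_field_power_card_minus_one:
  fixes x :: "'a::{finite,field}"
  assumes "x \<noteq> 0"
  shows "x ^ (card (UNIV::'a set) - 1) = 1"
proof -
  interpret field "ring_of_type :: 'a ring" by (rule field_ring_of_type)
  interpret G: group "mult_of (ring_of_type :: 'a ring)" by (rule field_mult_group)
  have "x [^]\<^bsub>mult_of ring_of_type\<^esub> order (mult_of (ring_of_type :: 'a ring))
          = \<one>\<^bsub>mult_of (ring_of_type :: 'a ring)\<^esub>"
    by (rule G.pow_order_eq_1) (use assms in \<open>simp add: ring_of_type_def\<close>)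
  moreover have "order (mult_of (ring_of_type :: 'a ring)) = card (UNIV::'a set) - 1"
    by (simp add: order_def card_Diff_singleton ring_of_type_def)
  ultimately show ?thesis
    by (simp add: nat_pow_mult_of pow_ring_of_type) (simp add: ring_of_type_def)
qed

lemma finite_field_has_generator:
  "\<exists>g::'a::{finite,field}. g \<noteq> 0 \<and> (\<forall>x. x \<noteq> 0 \<longrightarrow> (\<exists>i. x = g ^ i))"
proof -
  interpret field "ring_of_type :: 'a ring" by (rule field_ring_of_type)
  obtain g where g: "g \<in> carrier (mult_of (ring_of_type :: 'a ring))"
    "carrier (mult_of (ring_of_type :: 'a ring)) = {g [^]\<^bsub>ring_of_type\<^esub> i | i::nat. i \<in> UNIV}"
    using finite_field_mult_group_has_gen by (auto simp: ring_of_type_def)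
  have "g \<noteq> 0"
    using g(1) by (simp add: ring_of_type_def)
  moreover have "UNIV - {0} = range (power g)"
    using g(2) unfolding pow_ring_of_type by (auto simp: ring_of_type_def)
  ultimately show ?thesis
    by (intro exI[of _ g]) (auto simp: set_eq_iff)
qed

lemma of_nat_eq_0_if_prime_dvd_card:
  fixes r :: nat
  assumes "prime r" "r dvd card (UNIV :: 'a::{finite,field} set)"
  shows "of_nat r = (0::'a)"
proof -
  interpret field "ring_of_type :: 'a ring" by (rule field_ring_of_type)
  let ?G = "add_monoid (ring_of_type :: 'a ring)"
  obtain m where "order ?G = r ^ 1 * m"
    using assms(2) by (auto simp: order_def ring_of_type_def)
  then obtain H where H: "subgroup H ?G" "card H = r"
    using sylow_thm[OF assms(1) a_group, where a=1 and m=m] by (auto simp: ring_of_type_def)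
  interpret H: group "?G\<lparr>carrier := H\<rparr>"
    by (rule subgroup.subgroup_is_group[OF H(1) a_group])
  have "card H > 1" using H(2) assms(1) prime_gt_1_nat by auto
  then have "\<not> H \<subseteq> {0}"
    using card_mono[of "{0}" H] by fastforce
  then obtain h where h: "h \<in> H" "h \<noteq> 0"
    by blast
  have "h [^]\<^bsub>?G\<lparr>carrier := H\<rparr>\<^esub> order (?G\<lparr>carrier := H\<rparr>) = \<one>\<^bsub>?G\<lparr>carrier := H\<rparr>\<^esub>"
    by (rule H.pow_order_eq_1) (use h in simp)
  moreover have "x [^]\<^bsub>?G\<lparr>carrier := H\<rparr>\<^esub> (k::nat) = of_nat k * x" for x k
    by (induction k) (simp_all add: ring_of_type_def algebra_simps)
  ultimately have "of_nat r * h = 0"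
    by (simp add: order_def H(2) ring_of_type_def)
  then show ?thesis using h(2) by simp
qed

lemma card_UNIV_field_ge_2: "card (UNIV :: 'a::{finite,field} set) \<ge> 2"
  using card_mono[of UNIV "{0, 1::'a}"] by simp

lemma generator_powers_bij:
  fixes g :: "'a::{finite,field}"
  assumes "g \<noteq> 0" and gen: "\<forall>x. x \<noteq> 0 \<longrightarrow> (\<exists>i. x = g ^ i)"
  shows "bij_betw (power g) {..<card (UNIV::'a set) - 1} (UNIV - {0})"
proof -
  define N where "N = card (UNIV::'a set) - 1"
  have "N > 0"
    using card_UNIV_field_ge_2[where 'a='a] by (simp add: N_def)
  have "g ^ N = 1"
    unfolding N_def by (rule finite_field_power_card_minus_one[OF assms(1)])
  have image: "power g ` {..<N} = UNIV - {0}"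
  proof
    show "UNIV - {0} \<subseteq> power g ` {..<N}"
    proof
      fix x :: 'a assume "x \<in> UNIV - {0}"
      then obtain i where "x = g ^ i" using gen by auto
      also have "\<dots> = (g ^ N) ^ (i div N) * g ^ (i mod N)"
        by (simp flip: power_mult power_add)
      also have "\<dots> = g ^ (i mod N)"
        using \<open>g ^ N = 1\<close> by simp
      finally show "x \<in> power g ` {..<N}"
        using \<open>N > 0\<close> by (intro image_eqI[of _ _ "i mod N"]) simp_all
    qed
  qed (use assms(1) in auto)
  moreover have "card (UNIV - {0::'a}) = card {..<N}"
    by (simp add: N_def card_Diff_singleton)
  ultimately have "inj_on (power g) {..<N}"
    by (intro eq_card_imp_inj_on) simp_all
  with image show ?thesis
    by (simp add: bij_betw_def N_def)
qed

lemma exists_roots_of_unity_powers: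
  assumes "d dvd card (UNIV::'a::{finite,field} set) - 1"
  shows "\<exists>S::'a set. card S = d \<and>
           (\<forall>w\<in>S. w ^ d = 1 \<and> (\<exists>y. y \<noteq> 0 \<and> w = y ^ ((card (UNIV::'a set) - 1) div d)))"
proof -
  define N where "N = card (UNIV::'a set) - 1"
  define m where "m = N div d"
  obtain g :: 'a where g: "g \<noteq> 0" "\<forall>x. x \<noteq> 0 \<longrightarrow> (\<exists>i. x = g ^ i)"
    using finite_field_has_generator by blast
  have "N > 0"
    using card_UNIV_field_ge_2[where 'a='a] by (simp add: N_def)
  have dm: "d * m = N"
    using assms by (simp add: m_def N_def)
  then have "m > 0"
    using \<open>N > 0\<close> by (cases m) auto
  have "inj_on (power g) {..<N}"
    using generator_powers_bij[OF g] by (simp add: bij_betw_def N_def)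
  moreover have "(\<lambda>j. j * m) ` {..<d} \<subseteq> {..<N}"
    using \<open>m > 0\<close> dm by (auto simp flip: dm)
  ultimately have "inj_on (power g) ((\<lambda>j. j * m) ` {..<d})"
    by (rule inj_on_subset)
  moreover have "inj_on (\<lambda>j. j * m) {..<d}"
    using \<open>m > 0\<close> by (auto intro: inj_onI)
  ultimately have "inj_on (\<lambda>j. g ^ (j * m)) {..<d}"
    using comp_inj_on[of "\<lambda>j. j * m" "{..<d}" "power g"] by (simp add: o_def)
  then have "card ((\<lambda>j. g ^ (j * m)) ` {..<d}) = d"
    by (simp add: card_image)
  moreover have "(g ^ (j * m)) ^ d = 1" for j
  proof -
    have "(g ^ (j * m)) ^ d = (g ^ N) ^ j"
      by (simp flip: power_mult dm add: ac_simps)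
    then show ?thesis
      using finite_field_power_card_minus_one[OF g(1)] by (simp add: N_def)
  qed
  moreover have "\<exists>y. y \<noteq> 0 \<and> g ^ (j * m) = y ^ m" for j
    using g(1) by (intro exI[of _ "g ^ j"]) (simp add: power_mult)
  ultimately show ?thesis
    unfolding N_def[symmetric] m_def[symmetric]
    by (intro exI[of _ "(\<lambda>j. g ^ (j * m)) ` {..<d}"]) blast
qed

lemma exists_not_square_minus_self: "\<exists>c::'a::{finite,field}. \<forall>t. t * t - t \<noteq> c"
proof (rule ccontr)
  let ?f = "\<lambda>t::'a. t * t - t"
  assume "\<not> ?thesis"
  then have "\<exists>t. ?f t = c" for c
    by blast
  then have "surj ?f"
    unfolding surj_def by (metis (no_types, lifting))
  then have "inj ?f"
    by (rule finite_UNIV_surj_inj[OF finite_UNIV])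
  then show False
    using injD[of ?f 0 1] by simp
qed

definition qext_param :: "'a::{finite,field}" where
  "qext_param = (SOME c. \<forall>t::'a. t * t - t \<noteq> c)"

lemma square_minus_self_neq_qext_param: "t * t - t \<noteq> (qext_param :: 'a::{finite,field})"
  using someI_ex[OF exists_not_square_minus_self] unfolding qext_param_def by blast

text \<open>\<open>QExt a b\<close> stands for \<open>a + b \<theta>\<close> with \<open>\<theta>\<^sup>2 = \<theta> + qext_param\<close>. As \<open>t\<^sup>2 - t - qext_param\<close>
  has no root, this is the field with \<open>q\<^sup>2\<close> elements; unlike adjoining a square root, the
  construction also works in characteristic 2. Below, \<open>qconj\<close> is the automorphism
  \<open>\<theta> \<mapsto> 1 - \<theta>\<close> and \<open>qnorm x = x \<cdot> qconj x\<close>.\<close>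
datatype 'a qext = QExt (qre: 'a) (qim: 'a)

definition qnorm :: "'a::{finite,field} qext \<Rightarrow> 'a" where
  "qnorm x = qre x * qre x + qre x * qim x - qext_param * qim x * qim x"

lemma qnorm_eq_0_iff: "qnorm x = 0 \<longleftrightarrow> x = QExt 0 0"
proof
  assume norm: "qnorm x = 0"
  show "x = QExt 0 0"
  proof (cases "qim x = 0")
    case True
    then show ?thesis using norm by (cases x) (auto simp: qnorm_def)
  next
    case False
    define t where "t = - qre x / qim x"
    have "t * t - t = qnorm x / (qim x * qim x) + qext_param"
      using False by (simp add: t_def qnorm_def field_simps)
    then have "t * t - t = qext_param"
      using norm by simp
    with square_minus_self_neq_qext_param show ?thesis
      by blast
  qed
qed (simp add: qnorm_def)

instantiation qext :: ("{finite,field}") field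
begin

definition "0 = QExt 0 0"
definition "1 = QExt 1 0"
definition "x + y = QExt (qre x + qre y) (qim x + qim y)"
definition "- x = QExt (- qre x) (- qim x)"
definition "x - y = QExt (qre x - qre y) (qim x - qim y)"
definition "x * y = QExt (qre x * qre y + qext_param * qim x * qim y)
                         (qre x * qim y + qim x * qre y + qim x * qim y)"
definition "inverse x = QExt ((qre x + qim x) / qnorm x) (- qim x / qnorm x)"
definition "x div y = x * inverse (y :: 'a qext)"

instance
proof
  fix a b c :: "'a qext"
  show "a * b * c = a * (b * c)" by (simp add: times_qext_def algebra_simps)
  show "a * b = b * a" by (simp add: times_qext_def algebra_simps)
  show "1 * a = a" by (simp add: times_qext_def one_qext_def)
  show "a + b + c = a + (b + c)" by (simp add: plus_qext_def algebra_simps)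
  show "a + b = b + a" by (simp add: plus_qext_def algebra_simps)
  show "0 + a = a" by (simp add: plus_qext_def zero_qext_def)
  show "- a + a = 0" by (simp add: plus_qext_def uminus_qext_def zero_qext_def)
  show "a - b = a + - b" by (simp add: plus_qext_def uminus_qext_def minus_qext_def)
  show "(a + b) * c = a * c + b * c" by (simp add: plus_qext_def times_qext_def algebra_simps)
  show "(0::'a qext) \<noteq> 1" by (simp add: zero_qext_def one_qext_def)
  show "a div b = a * inverse b" by (simp add: divide_qext_def)
  show "inverse 0 = (0::'a qext)" by (simp add: inverse_qext_def zero_qext_def qnorm_def)
  assume "a \<noteq> 0"
  then have "qnorm a \<noteq> 0" by (simp add: qnorm_eq_0_iff zero_qext_def)
  then show "inverse a * a = 1"
    by (simp add: inverse_qext_def times_qext_def one_qext_def field_simps)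
       (simp add: qnorm_def algebra_simps)
qed

end

lemma bij_QExt: "bij (\<lambda>(a, b). QExt a b)"
  by (auto simp: bij_def inj_def image_iff) (metis qext.exhaust)

instance qext :: ("{finite,field}") finite
proof
  have "(UNIV :: 'a qext set) = (\<lambda>(a, b). QExt a b) ` UNIV"
    using bij_is_surj[OF bij_QExt] by (rule sym)
  also have "finite \<dots>"
    by (rule finite_imageI) simp
  finally show "finite (UNIV :: 'a qext set)" .
qed

lemma card_UNIV_qext: "card (UNIV :: 'a::{finite,field} qext set) = card (UNIV::'a set) ^ 2"
proof -
  have "card (UNIV :: 'a qext set) = card (UNIV :: ('a \<times> 'a) set)"
    using bij_betw_same_card[OF bij_QExt] by (rule sym)
  then show ?thesis
    using card_cartesian_product[of "UNIV :: 'a set" "UNIV :: 'a set"]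
    by (simp add: power2_eq_square)
qed

definition qembed :: "'a::{finite,field} \<Rightarrow> 'a qext" where
  "qembed t = QExt t 0"

lemma qembed_eq_iff [simp]: "qembed a = qembed b \<longleftrightarrow> a = b"
  by (simp add: qembed_def)

lemma qembed_0 [simp]: "qembed 0 = 0" by (simp add: qembed_def zero_qext_def)
lemma qembed_1 [simp]: "qembed 1 = 1" by (simp add: qembed_def one_qext_def)
lemma qembed_add: "qembed (a + b) = qembed a + qembed b" by (simp add: qembed_def plus_qext_def)
lemma qembed_mult: "qembed (a * b) = qembed a * qembed b" by (simp add: qembed_def times_qext_def)
lemma qembed_uminus: "qembed (- a) = - qembed a" by (simp add: qembed_def uminus_qext_def)

lemma qembed_power: "qembed (a ^ n) = qembed a ^ n"
  by (induction n) (simp_all add: qembed_mult)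

lemma qembed_of_nat: "qembed (of_nat n) = of_nat n"
  by (induction n) (simp_all add: qembed_add)

lemma qembed_sum: "qembed (sum f A) = (\<Sum>i\<in>A. qembed (f i))"
  by (induction A rule: infinite_finite_induct) (simp_all add: qembed_add)

definition qconj :: "'a::{finite,field} qext \<Rightarrow> 'a qext" where
  "qconj x = QExt (qre x + qim x) (- qim x)"

lemma qconj_0 [simp]: "qconj 0 = 0" by (simp add: qconj_def zero_qext_def)
lemma qconj_1 [simp]: "qconj 1 = 1" by (simp add: qconj_def one_qext_def)
lemma qconj_qembed [simp]: "qconj (qembed t) = qembed t" by (simp add: qconj_def qembed_def)
lemma qconj_add: "qconj (a + b) = qconj a + qconj b" by (simp add: qconj_def plus_qext_def)
lemma qconj_mult: "qconj (a * b) = qconj a * qconj b"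
  by (simp add: qconj_def times_qext_def algebra_simps)

lemma qconj_inverse: "qconj (inverse a) = inverse (qconj a)"
proof (cases "a = 0")
  case False
  then have "qconj a * qconj (inverse a) = 1"
    by (metis qconj_1 qconj_mult right_inverse)
  then show ?thesis
    by (metis inverse_unique)
qed simp

lemma qconj_divide: "qconj (a / b) = qconj a / qconj b"
  by (simp add: divide_inverse qconj_mult qconj_inverse)

lemma qconj_power: "qconj (a ^ n) = qconj a ^ n"
  by (induction n) (simp_all add: qconj_mult)

lemma mult_qconj: "a * qconj a = qembed (qnorm a)"
  by (simp add: qconj_def times_qext_def qembed_def qnorm_def algebra_simps)

lemma qnorm_mult: "qnorm (a * b) = qnorm a * qnorm b"
proof -
  have "qembed (qnorm (a * b)) = (a * qconj a) * (b * qconj b)"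
    by (simp add: mult_qconj[symmetric] qconj_mult algebra_simps)
  then show ?thesis
    by (simp add: mult_qconj flip: qembed_mult)
qed

lemma qnorm_power: "qnorm (a ^ n) = qnorm a ^ n"
  by (induction n) (simp_all add: qnorm_mult, simp add: qnorm_def one_qext_def)

lemma qconj_fixed_imp_qembed: "qconj a = a \<Longrightarrow> a = qembed (qre a)"
  by (cases a) (simp add: qconj_def qembed_def)

text \<open>\<open>rev_dickson2_eval m x\<close> is the value at \<open>x\<close> of the reversed Dickson polynomial of the second
  kind \<open>E\<^sub>m(1, x)\<close>.\<close>
definition rev_dickson2_eval :: "nat \<Rightarrow> 'a::comm_ring_1 \<Rightarrow> 'a" where
  "rev_dickson2_eval m x = (\<Sum>i\<le>m. of_nat ((m - i) choose i) * (- x) ^ i)"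

lemma rev_dickson2_eval_0 [simp]: "rev_dickson2_eval 0 x = 1"
  by (simp add: rev_dickson2_eval_def)

lemma rev_dickson2_eval_1 [simp]: "rev_dickson2_eval (Suc 0) x = 1"
  by (simp add: rev_dickson2_eval_def)

lemma choose_Suc_diff_Suc:
  "k \<le> Suc m \<Longrightarrow> (Suc m - k) choose Suc k = ((m - k) choose Suc k) + ((m - k) choose k)"
  by (cases "k \<le> m") (simp_all add: Suc_diff_le)

lemma rev_dickson2_eval_Suc_Suc:
  "rev_dickson2_eval (Suc (Suc m)) x = rev_dickson2_eval (Suc m) x - x * rev_dickson2_eval m x"
proof -
  define y where "y = - x"
  have split: "rev_dickson2_eval (Suc (Suc m)) x
      = 1 + (\<Sum>k\<le>Suc m. of_nat ((m - k) choose Suc k) * y ^ Suc k)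
          + (\<Sum>k\<le>Suc m. of_nat ((m - k) choose k) * y ^ Suc k)"
  proof -
    have "rev_dickson2_eval (Suc (Suc m)) x
        = 1 + (\<Sum>k\<le>Suc m. of_nat ((Suc m - k) choose Suc k) * y ^ Suc k)"
      unfolding rev_dickson2_eval_def sum.atMost_Suc_shift by (simp add: y_def)
    also have "(\<Sum>k\<le>Suc m. of_nat ((Suc m - k) choose Suc k) * y ^ Suc k)
        = (\<Sum>k\<le>Suc m. of_nat ((m - k) choose Suc k) * y ^ Suc k
                       + of_nat ((m - k) choose k) * y ^ Suc k)"
      by (intro sum.cong refl) (simp add: choose_Suc_diff_Suc algebra_simps)
    finally show ?thesis
      by (simp add: sum.distrib add.assoc)
  qed
  have "rev_dickson2_eval (Suc m) x = 1 + (\<Sum>k\<le>m. of_nat ((m - k) choose Suc k) * y ^ Suc k)"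
    unfolding rev_dickson2_eval_def by (subst sum.atMost_Suc_shift) (simp add: y_def)
  also have "(\<Sum>k\<le>m. of_nat ((m - k) choose Suc k) * y ^ Suc k)
      = (\<Sum>k\<le>Suc m. of_nat ((m - k) choose Suc k) * y ^ Suc k)"
    by (subst sum.atMost_Suc) simp
  finally have shift: "rev_dickson2_eval (Suc m) x
      = 1 + (\<Sum>k\<le>Suc m. of_nat ((m - k) choose Suc k) * y ^ Suc k)" .
  have "(\<Sum>k\<le>Suc m. of_nat ((m - k) choose k) * y ^ Suc k) = y * rev_dickson2_eval m x"
    unfolding rev_dickson2_eval_def y_def by (simp add: sum_distrib_left algebra_simps)
  then show ?thesis
    using split shift by (simp add: y_def)
qed

lemma rev_dickson2_eval_diff_powers:
  fixes u v :: "'a::comm_ring_1"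
  assumes "u + v = 1"
  shows "(u - v) * rev_dickson2_eval m (u * v) = u ^ Suc m - v ^ Suc m"
proof -
  have "(u - v) * rev_dickson2_eval m (u * v) = u ^ Suc m - v ^ Suc m \<and>
        (u - v) * rev_dickson2_eval (Suc m) (u * v) = u ^ Suc (Suc m) - v ^ Suc (Suc m)"
  proof (induction m)
    case 0
    have "u * u - v * v = (u - v) * (u + v)"
      by (simp add: algebra_simps)
    then show ?case
      using assms by (simp add: power2_eq_square)
  next
    case (Suc m)
    have "(u - v) * rev_dickson2_eval (Suc (Suc m)) (u * v)
        = (u - v) * rev_dickson2_eval (Suc m) (u * v) - u * v * ((u - v) * rev_dickson2_eval m (u * v))"
      by (simp add: rev_dickson2_eval_Suc_Suc algebra_simps)
    also have "\<dots> = (u + v) * (u ^ Suc (Suc m) - v ^ Suc (Suc m)) - u * v * (u ^ Suc m - v ^ Suc m)"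
      using Suc.IH assms by simp
    also have "\<dots> = u ^ Suc (Suc (Suc m)) - v ^ Suc (Suc (Suc m))"
      by (simp add: algebra_simps)
    finally show ?case
      using Suc.IH by simp
  qed
  then show ?thesis
    by simp
qed

lemma rd3_coeff_eq_choose_diff:
  assumes "1 \<le> i" "2 * i \<le> n"
  shows "rd3_coeff n i = ((n - i) choose i) - ((n - 1 - i) choose (i - 1))"
    and "(n - 1 - i) choose (i - 1) \<le> (n - i) choose i"
proof -
  define m where "m = n - i"
  have "i \<le> m" "1 \<le> m"
    using assms by (auto simp: m_def)
  have absorb: "i * (m choose i) = m * ((m - 1) choose (i - 1))"
    using Suc_times_binomial[of "i - 1" "m - 1"] assms \<open>1 \<le> m\<close> by simp
  have "m * ((m - 1) choose (i - 1)) \<le> m * (m choose i)"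
    using absorb \<open>i \<le> m\<close> by (metis mult_le_mono1)
  then have le: "(m - 1) choose (i - 1) \<le> m choose i"
    using \<open>1 \<le> m\<close> by simp
  have "(n - 2 * i) * (m choose i) = m * (m choose i) - i * (m choose i)"
    by (simp add: m_def diff_mult_distrib)
  also have "\<dots> = m * ((m choose i) - ((m - 1) choose (i - 1)))"
    by (simp add: absorb diff_mult_distrib2)
  finally show "rd3_coeff n i = ((n - i) choose i) - ((n - 1 - i) choose (i - 1))"
    using \<open>1 \<le> m\<close> by (simp add: rd3_coeff_def m_def)
  show "(n - 1 - i) choose (i - 1) \<le> (n - i) choose i"
    using le by (simp add: m_def)
qed

text \<open>By the coefficient identity above \<open>F\<^sub>n(1, x) = E\<^sub>n(1, x) + x E\<^sub>n\<^sub>-\<^sub>2(1, x)\<close>, which is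
  \<open>E\<^sub>n\<^sub>-\<^sub>1(1, x)\<close> by the recurrence.\<close>
lemma poly_rev_dickson3_one:
  assumes "n \<ge> 1"
  shows "poly (rev_dickson3 n (1::'a::comm_ring_1)) x = rev_dickson2_eval (n - 1) x"
proof (cases "n = 1")
  case True
  then show ?thesis
    by (simp add: rev_dickson3_def rd3_coeff_def)
next
  case False
  then obtain k where n: "n = Suc (Suc k)"
    using assms by (metis One_nat_def Suc_le_D not_less_eq_eq le_Suc_eq)
  define b where "b i = (if i = 0 then 0 else (n - 1 - i) choose (i - 1))" for i
  have coeff: "of_nat (if i \<le> n div 2 then rd3_coeff n i else 0)
             = (of_nat ((n - i) choose i) - of_nat (b i) :: 'a)" if "i \<le> n" for i
  proof (cases "i \<le> n div 2")
    case True
    then show ?thesis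
      using rd3_coeff_eq_choose_diff[of i n] n by (cases "i = 0") (simp_all add: b_def rd3_coeff_def of_nat_diff)
  next
    case False
    then have "(n - i) choose i = 0" "b i = 0"
      using n by (auto simp: b_def)
    with False show ?thesis
      by (simp only: if_False of_nat_0 diff_self)
  qed
  have "poly (rev_dickson3 n (1::'a)) x = (\<Sum>i\<le>n div 2. of_nat (rd3_coeff n i) * (- x) ^ i)"
    using assms by (simp add: rev_dickson3_def poly_sum poly_monom power_minus[of x] mult.assoc)
  also have "\<dots> = (\<Sum>i\<le>n. of_nat (if i \<le> n div 2 then rd3_coeff n i else 0) * (- x) ^ i)"
    by (rule sum.mono_neutral_cong_left) auto
  also have "\<dots> = (\<Sum>i\<le>n. of_nat ((n - i) choose i) * (- x) ^ i - of_nat (b i) * (- x) ^ i)"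
    by (intro sum.cong refl) (simp add: coeff left_diff_distrib)
  also have "\<dots> = rev_dickson2_eval n x - (\<Sum>i\<le>n. of_nat (b i) * (- x) ^ i)"
    by (simp add: sum_subtractf rev_dickson2_eval_def)
  also have "(\<Sum>i\<le>n. of_nat (b i) * (- x) ^ i) = (\<Sum>j\<le>Suc k. of_nat ((k - j) choose j) * (- x) ^ Suc j)"
    unfolding n sum.atMost_Suc_shift by (simp add: b_def n)
  also have "\<dots> = - x * rev_dickson2_eval k x"
    unfolding rev_dickson2_eval_def by (simp add: sum_distrib_left algebra_simps)
  finally show ?thesis
    by (simp add: n rev_dickson2_eval_Suc_Suc)
qed

lemma qembed_rev_dickson2_eval: "qembed (rev_dickson2_eval m x) = rev_dickson2_eval m (qembed x)"
  by (simp add: rev_dickson2_eval_def qembed_sum qembed_mult qembed_of_nat qembed_power qembed_uminus)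

lemma eq_or_mult_eq_1_if_div_square_eq:
  fixes w1 w2 :: "'a::field"
  assumes "1 + w1 \<noteq> 0" "1 + w2 \<noteq> 0" "w1 / (1 + w1)^2 = w2 / (1 + w2)^2"
  shows "w1 = w2 \<or> w1 * w2 = 1"
proof -
  have "w1 * (1 + w2)^2 = w2 * (1 + w1)^2"
    using assms by (simp add: field_simps)
  then have "(w1 - w2) * (1 - w1 * w2) = 0"
    by (simp add: algebra_simps power2_eq_square)
  then show ?thesis
    by auto
qed

lemma rev_dickson3_root_from_root_of_unity:
  fixes w :: "'a::{finite,field} qext"
  assumes "w ^ n = 1" "n \<ge> 1" "w \<noteq> 1" "w \<noteq> -1" "qconj w = w \<or> qnorm w = 1"
  shows "\<exists>x. qembed x = w / (1 + w)^2 \<and> poly (rev_dickson3 n (1::'a)) x = 0"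
proof -
  have "w \<noteq> 0"
    using assms(1,2) by (auto simp: power_0_left)
  have "1 + w \<noteq> 0"
    using assms(4) by (metis add_eq_0_iff)
  have "qconj (w / (1 + w)^2) = w / (1 + w)^2"
  proof (cases "qconj w = w")
    case False
    then have "w * qconj w = 1"
      using assms(5) by (simp add: mult_qconj)
    then have "qconj w = inverse w"
      by (metis inverse_unique)
    moreover have "inverse w / (1 + inverse w)^2 = w / (1 + w)^2"
      using \<open>w \<noteq> 0\<close> \<open>1 + w \<noteq> 0\<close> by (simp add: field_simps power2_eq_square)
    ultimately show ?thesis
      by (simp add: qconj_divide qconj_add qconj_power)
  qed (simp add: qconj_divide qconj_add qconj_power)
  then obtain x where x: "qembed x = w / (1 + w)^2"
    by (metis qconj_fixed_imp_qembed)
  define u where "u = w / (1 + w)"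
  define v where "v = 1 / (1 + w)"
  have "u + v = 1"
    using \<open>1 + w \<noteq> 0\<close> by (simp add: u_def v_def field_simps)
  moreover have "u * v = w / (1 + w)^2"
    by (simp add: u_def v_def power2_eq_square)
  moreover have "u ^ n = v ^ n"
    using assms(1) by (simp add: u_def v_def power_divide)
  moreover have "u - v \<noteq> 0"
    using assms(3) \<open>1 + w \<noteq> 0\<close> by (simp add: u_def v_def diff_divide_distrib)
  ultimately have "rev_dickson2_eval (n - 1) (u * v) = 0"
    using rev_dickson2_eval_diff_powers[of u v "n - 1"] assms(2) by simp
  then have "rev_dickson2_eval (n - 1) x = 0"
    by (metis x \<open>u * v = w / (1 + w)^2\<close> qembed_rev_dickson2_eval qembed_0 qembed_eq_iff)
  then show ?thesis
    using x poly_rev_dickson3_one[OF assms(2), where 'a='a] by (intro exI[of _ x]) simp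
qed

definition base_or_norm_one_roots :: "nat \<Rightarrow> 'a::{finite,field} qext set" where
  "base_or_norm_one_roots n = {w. w ^ n = 1 \<and> (qconj w = w \<or> qnorm w = 1)}"

lemma card_base_or_norm_one_roots_le:
  fixes n :: nat
  assumes inj: "inj (poly (rev_dickson3 n (1::'a::{finite,field})))" and "n \<ge> 1"
  shows "card (base_or_norm_one_roots n - {1, -1} :: 'a qext set) \<le> 2"
proof -
  define W :: "'a qext set" where "W = base_or_norm_one_roots n - {1, -1}"
  have root: "\<exists>x. qembed x = w / (1 + w)^2 \<and> poly (rev_dickson3 n (1::'a)) x = 0"
    if "w \<in> W" for w
    using that \<open>n \<ge> 1\<close> rev_dickson3_root_from_root_of_unity[of w n]
    by (auto simp: W_def base_or_norm_one_roots_def)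
  have same_root: "w2 = w1 \<or> w2 = inverse w1" if w1: "w1 \<in> W" and w2: "w2 \<in> W" for w1 w2
  proof -
    obtain x1 where x1: "qembed x1 = w1 / (1 + w1)^2" "poly (rev_dickson3 n (1::'a)) x1 = 0"
      using root[OF w1] by blast
    obtain x2 where x2: "qembed x2 = w2 / (1 + w2)^2" "poly (rev_dickson3 n (1::'a)) x2 = 0"
      using root[OF w2] by blast
    have "x1 = x2"
      using injD[OF inj] x1(2) x2(2) by simp
    moreover have "1 + w1 \<noteq> 0" "1 + w2 \<noteq> 0"
      using that by (auto simp: W_def add_eq_0_iff)
    ultimately have "w1 = w2 \<or> w1 * w2 = 1"
      using x1(1) x2(1) eq_or_mult_eq_1_if_div_square_eq by metis
    then show ?thesis
      by (metis inverse_unique)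
  qed
  have "card W \<le> 2"
  proof (cases "W = {}")
    case False
    then obtain w0 where "w0 \<in> W"
      by blast
    then have "W \<subseteq> {w0, inverse w0}"
      using same_root by blast
    then have "card W \<le> card {w0, inverse w0}"
      by (intro card_mono) auto
    also have "\<dots> \<le> 2"
      by (simp add: card_insert_if)
    finally show ?thesis .
  qed simp
  then show ?thesis
    by (simp add: W_def)
qed

lemma power_eq_1_if_dvd: "x ^ d = 1 \<Longrightarrow> d dvd n \<Longrightarrow> x ^ n = (1::'a::monoid_mult)"
  by (auto elim!: dvdE simp: power_mult)

lemma exists_qembedded_roots_of_unity:
  "\<exists>A::'a::{finite,field} qext set. card A = gcd n (card (UNIV::'a set) - 1) \<and>
     (\<forall>w\<in>A. w ^ n = 1 \<and> qconj w = w)"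
proof -
  define d where "d = gcd n (card (UNIV::'a set) - 1)"
  obtain S :: "'a set" where S: "card S = d" "\<forall>w\<in>S. w ^ d = 1"
    using exists_roots_of_unity_powers[of d] by (auto simp: d_def)
  have "card (qembed ` S) = d"
    using S(1) by (simp add: card_image inj_on_def)
  moreover have "qembed w ^ n = 1" if "w \<in> S" for w
    using S(2) that power_eq_1_if_dvd[of "qembed w" d n]
    by (simp add: d_def flip: qembed_power)
  ultimately show ?thesis
    unfolding d_def by (intro exI[of _ "qembed ` S"]) auto
qed

lemma exists_norm_one_roots_of_unity:
  "\<exists>B::'a::{finite,field} qext set. card B = gcd n (card (UNIV::'a set) + 1) \<and>
     (\<forall>w\<in>B. w ^ n = 1 \<and> qnorm w = 1)"
proof -
  define q where "q = card (UNIV::'a set)"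
  define d where "d = gcd n (q + 1)"
  have "q * q - 1 = (q - 1) * (q + 1)"
    by (cases q) (simp_all add: algebra_simps)
  then have q2: "card (UNIV::'a qext set) - 1 = (q - 1) * (q + 1)"
    by (simp add: card_UNIV_qext q_def power2_eq_square)
  have "d dvd q + 1"
    by (simp add: d_def)
  then have "d dvd card (UNIV::'a qext set) - 1"
    unfolding q2 by (rule dvd_mult)
  then obtain B :: "'a qext set" where B: "card B = d"
    "\<forall>w\<in>B. w ^ d = 1 \<and> (\<exists>y. y \<noteq> 0 \<and> w = y ^ ((card (UNIV::'a qext set) - 1) div d))"
    using exists_roots_of_unity_powers by blast
  have "w ^ n = 1 \<and> qnorm w = 1" if "w \<in> B" for w
  proof -
    obtain y where "w ^ d = 1" "y \<noteq> 0" and w: "w = y ^ ((card (UNIV::'a qext set) - 1) div d)"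
      using bspec[OF B(2) \<open>w \<in> B\<close>] by (elim conjE exE)
    have "w ^ n = 1"
      using \<open>w ^ d = 1\<close> by (rule power_eq_1_if_dvd) (simp add: d_def)
    have "(card (UNIV::'a qext set) - 1) div d = (q - 1) * ((q + 1) div d)"
      unfolding q2 by (rule div_mult_swap[OF \<open>d dvd q + 1\<close>, symmetric])
    then have w': "w = (y ^ (q - 1)) ^ ((q + 1) div d)"
      unfolding w by (simp only: power_mult)
    have "qnorm y \<noteq> 0"
      using \<open>y \<noteq> 0\<close> by (simp add: qnorm_eq_0_iff zero_qext_def)
    then have "qnorm y ^ (q - 1) = 1"
      unfolding q_def by (rule finite_field_power_card_minus_one)
    then have "qnorm w = 1"
      unfolding w' qnorm_power by simp
    with \<open>w ^ n = 1\<close> show ?thesis ..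
  qed
  then show ?thesis
    using B(1) unfolding d_def q_def by blast
qed

lemma qconj_fixed_norm_one_imp: "qconj w = w \<Longrightarrow> qnorm w = 1 \<Longrightarrow> w = 1 \<or> w = -1"
  using mult_qconj[of w] square_eq_1_iff[of w] by (simp add: power2_eq_square)

lemma gcd_sum_le_if_inj_rev_dickson3:
  fixes n :: nat
  assumes inj: "inj (poly (rev_dickson3 n (1::'a::{finite,field})))" and "n \<ge> 1"
  shows "gcd n (card (UNIV::'a set) - 1) + gcd n (card (UNIV::'a set) + 1)
           \<le> (if even n then 6 else 4)"
proof -
  obtain A :: "'a qext set" where A: "card A = gcd n (card (UNIV::'a set) - 1)"
    "\<forall>w\<in>A. w ^ n = 1 \<and> qconj w = w"
    using exists_qembedded_roots_of_unity by blast
  obtain B :: "'a qext set" where B: "card B = gcd n (card (UNIV::'a set) + 1)"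
    "\<forall>w\<in>B. w ^ n = 1 \<and> qnorm w = 1"
    using exists_norm_one_roots_of_unity by blast
  define P where "P = (A \<union> B) \<inter> {1, -1}"
  have "card (A \<union> B - {1, -1}) \<le> card (base_or_norm_one_roots n - {1, -1} :: 'a qext set)"
    by (rule card_mono) (use A(2) B(2) in \<open>auto simp: base_or_norm_one_roots_def\<close>)
  then have "card (A \<union> B - {1, -1}) \<le> 2"
    using card_base_or_norm_one_roots_le[OF inj \<open>n \<ge> 1\<close>] by linarith
  moreover have "card (A \<union> B) \<le> card (A \<union> B - {1, -1}) + card P"
  proof -
    have "A \<union> B = (A \<union> B - {1, -1}) \<union> P"
      by (auto simp: P_def)
    then show ?thesis
      by (metis card_Un_le)
  qed
  moreover have "A \<inter> B \<subseteq> P"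
    using A(2) B(2) qconj_fixed_norm_one_imp by (auto simp: P_def)
  then have "card (A \<inter> B) \<le> card P"
    by (intro card_mono) simp_all
  moreover have "card A + card B = card (A \<union> B) + card (A \<inter> B)"
    by (rule card_Un_Int) simp_all
  moreover have "card P \<le> 2"
  proof -
    have "card P \<le> card {1, -1 :: 'a qext}"
      by (intro card_mono) (auto simp: P_def)
    also have "\<dots> \<le> 2"
      by (simp add: card_insert_if)
    finally show ?thesis .
  qed
  moreover have "card P \<le> 1" if "odd n"
  proof -
    have "-1 \<notin> A \<union> B \<or> (-1 :: 'a qext) = 1"
      using A(2) B(2) \<open>odd n\<close> by auto
    then have "P \<subseteq> {1}"
      by (auto simp: P_def)
    then have "card P \<le> card {1 :: 'a qext}"
      by (intro card_mono) simp_all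
    then show ?thesis
      by simp
  qed
  ultimately show ?thesis
    using A(1) B(1) by (cases "even n") simp_all
qed

lemma gcd_square_minus_1_eq_3:
  fixes n q :: nat
  assumes "odd q" "\<not> 3 dvd q" "3 dvd n" "n \<noteq> 0"
    and bound: "gcd n (q - 1) + gcd n (q + 1) \<le> (if even n then 6 else 4)"
  shows "gcd n (q^2 - 1) = 3"
proof -
  define g1 where "g1 = gcd n (q - 1)"
  define g2 where "g2 = gcd n (q + 1)"
  have "g1 > 0" "g2 > 0"
    using \<open>n \<noteq> 0\<close> by (simp_all add: g1_def g2_def)
  have "3 dvd q - 1 \<or> 3 dvd q + 1"
    using assms(1,2) by presburger
  then have three: "3 dvd g1 \<or> 3 dvd g2"
    using \<open>3 dvd n\<close> by (auto simp: g1_def g2_def)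
  have "odd n"
  proof
    assume "even n"
    then have "2 dvd g1" "2 dvd g2"
      using \<open>odd q\<close> by (auto simp: g1_def g2_def)
    then have "g1 + g2 \<ge> 8"
      using three \<open>g1 > 0\<close> \<open>g2 > 0\<close> by (auto elim!: dvdE) presburger+
    with bound \<open>even n\<close> show False
      by (simp add: g1_def g2_def)
  qed
  then have "g1 + g2 \<le> 4"
    using bound by (simp add: g1_def g2_def)
  then have "(g1 = 3 \<and> g2 = 1) \<or> (g1 = 1 \<and> g2 = 3)"
    using three \<open>g1 > 0\<close> \<open>g2 > 0\<close> by (auto elim!: dvdE)
  then have "gcd n ((q - 1) * (q + 1)) = 3"
  proof
    assume "g1 = 3 \<and> g2 = 1"
    then have "coprime n (q + 1)"
      by (simp add: g2_def coprime_iff_gcd_eq_1)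
    then have "gcd n ((q - 1) * (q + 1)) = g1"
      unfolding g1_def by (rule gcd_mult_right_right_cancel)
    with \<open>g1 = 3 \<and> g2 = 1\<close> show ?thesis
      by simp
  next
    assume "g1 = 1 \<and> g2 = 3"
    then have "coprime n (q - 1)"
      by (simp add: g1_def coprime_iff_gcd_eq_1)
    then have "gcd n ((q - 1) * (q + 1)) = g2"
      unfolding g2_def by (rule gcd_mult_right_left_cancel)
    with \<open>g1 = 1 \<and> g2 = 3\<close> show ?thesis
      by simp
  qed
  moreover have "q^2 - 1 = (q - 1) * (q + 1)"
    by (simp add: power2_eq_square algebra_simps)
  ultimately show ?thesis
    by simp
qed

theorem theorem3p5:
  fixes p n :: nat
  assumes "prime p" and "p > 3"
    and "CHAR('a::{finite,field}) = p"
    and "3 dvd n"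
    and "permutation_poly (rev_dickson3 n (1::'a))"
  shows "gcd n (card (UNIV :: 'a set) ^ 2 - 1) = 3"
proof -
  have char: "of_nat r \<noteq> (0::'a)" if "r \<in> {2, 3}" for r
    using assms(2,3) that by (auto simp: of_nat_eq_0_iff_char_dvd dest: dvd_imp_le)
  have "odd (card (UNIV :: 'a set))"
    using char[of 2] of_nat_eq_0_if_prime_dvd_card[of 2, where 'a='a] by auto
  moreover have "\<not> 3 dvd card (UNIV :: 'a set)"
    using char[of 3] of_nat_eq_0_if_prime_dvd_card[of 3, where 'a='a] by auto
  moreover have inj: "inj (poly (rev_dickson3 n (1::'a)))"
    using assms(5) by (simp add: permutation_poly_def bij_is_inj)
  moreover have "n \<noteq> 0"
  proof
    assume "n = 0"
    then show False
      using injD[OF inj, of 0 1] by (simp add: rev_dickson3_def)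
  qed
  ultimately show ?thesis
    using gcd_square_minus_1_eq_3 assms(4) gcd_sum_le_if_inj_rev_dickson3[OF inj] by simp
qed

end
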